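(* Let $G$ be one of $\mathrm{GL}_n$, $\mathrm{SO}_{2n+1}$, $\mathrm{SO}_{2n}$, $\mathrm{Sp}_{2n}$ (excluding $\mathrm{SO}_{2n+1}$ when $p=2$) with natural module $V$, let $P$ be a proper parabolic subgroup with unipotent radical $Q$ and natural flag $0=W_0<W_1<\dots<W_\ell=V$. Let $g\in Q$, $r\ge1$, and let $V_r$ be a subspace spanned by $r$ Jordan chains of $g$ belonging to $r$ distinct Jordan blocks. Then $\dim V_r\le\sum_{i=1}^\ell\min\{r,\dim W_i/W_{i-1}\}$, with equality if and only if $\dim(V_r\cap W_j)=\sum_{i=1}^j\min\{r,\dim W_i/W_{i-1}\}$ for all $j\ge1$. In particular, if $\lambda_1(g)\ge\lambda_2(g)\ge\cdots$ are the Jordan block sizes of $g$, then $\sum_{i=1}^r\lambda_i(g)\le\sum_{i=1}^\ell\min\{r,\dim W_i/W_{i-1}\}$ for all $r\ge1$.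
   Context: Setup: a subspace $W$ of the natural module is totally singular if the quadratic form (hence the bilinear form $\beta$) vanishes on it; for $\mathrm{GL}_n$ every subspace counts as totally singular. A flag $W_0\le\dots\le W_\ell$ is totally singular if each $W_i$ is totally singular or equals $W^\perp$ for some totally singular $W$. Write a Levi factor of $P$ as $\mathrm{GL}_{n_1}\cdots\mathrm{GL}_{n_s}\mathrm{Cl}_m$ ($m\ge 0$; $\mathrm{Cl}_m$ a classical group of the same type as $G$ of rank $m$, absent for $\mathrm{GL}_n$ where $m=0$). A natural flag for $P$ is a totally singular flag of length $\ell$ whose stabilizer is $P$, where $\ell=s$ if $G=\mathrm{GL}_n$, $\ell=2s$ if $m=0$ and $G\in\{\mathrm{SO}_{2n},\mathrm{Sp}_{2n}\}$, and $\ell=2s+1$ if $m\ge1$ or $G=\mathrm{SO}_{2n+1}$. The unipotent radical $Q$ is the set of elements of $P$ acting trivially on every factor $W_i/W_{i-1}$. A Jordan chain of length $x$ for $g$ is $v_1,\dots,v_x$ with $(g-1)v_1=0$, $(g-1)v_i=v_{i-1}$. *)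

theory Defs
  imports "HOL-Analysis.Analysis"
begin

definition jordan_chain :: "'a::field^'n^'n \<Rightarrow> ('a^'n) list \<Rightarrow> bool" where
  "jordan_chain g vs \<longleftrightarrow>
     (\<forall>i < length vs. g *v (vs ! i) - vs ! i = (if i = 0 then 0 else vs ! (i - 1)))"

text \<open>A Jordan decomposition of g: a list of nonempty Jordan chains (the Jordan
  blocks) whose concatenation is a basis of V.\<close>
definition jordan_decomp :: "'a::field^'n^'n \<Rightarrow> ('a^'n) list list \<Rightarrow> bool" where
  "jordan_decomp g bs \<longleftrightarrow>
     (\<forall>b \<in> set bs. b \<noteq> [] \<and> jordan_chain g b) \<and>
     distinct (concat bs) \<and>
     vec.independent (set (concat bs)) \<and>
     vec.span (set (concat bs)) = UNIV"

text \<open>Jordan block sizes lambda_1 >= lambda_2 >= ... (0-indexed here), padded by zeros.\<close>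
definition jordan_sizes :: "('a^'n) list list \<Rightarrow> nat \<Rightarrow> nat" where
  "jordan_sizes bs i = (let l = rev (sort (map length bs)) in if i < length l then l ! i else 0)"

definition is_flag :: "nat \<Rightarrow> (nat \<Rightarrow> ('a::field^'n) set) \<Rightarrow> bool" where
  "is_flag l W \<longleftrightarrow> (\<forall>i \<le> l. vec.subspace (W i)) \<and> W 0 = {0} \<and> W l = UNIV \<and>
     (\<forall>i \<in> {1..l}. W (i - 1) \<subset> W i)"

text \<open>g lies in the unipotent radical of the flag stabilizer: g is invertible, and
  acts trivially on every factor W_i/W_(i-1).\<close>
definition in_unipotent_radical :: "'a::field^'n^'n \<Rightarrow> nat \<Rightarrow> (nat \<Rightarrow> ('a^'n) set) \<Rightarrow> bool" where
  "in_unipotent_radical g l W \<longleftrightarrow> invertible g \<and>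
     (\<forall>i \<in> {1..l}. \<forall>v \<in> W i. g *v v \<in> W i \<and> g *v v - v \<in> W (i - 1))"

definition flag_bound :: "(nat \<Rightarrow> ('a::field^'n) set) \<Rightarrow> nat \<Rightarrow> nat \<Rightarrow> nat" where
  "flag_bound W r j = (\<Sum>i = 1..j. min r (vec.dim (W i) - vec.dim (W (i - 1))))"

text \<open>Vr is spanned by r Jordan chains cs!0..cs!(r-1) of g, the i-th one lying in the
  Jordan block bs!(blk i) of the Jordan decomposition bs, the blocks blk i being distinct.\<close>
definition chain_span :: "'a::field^'n^'n \<Rightarrow> ('a^'n) list list \<Rightarrow> nat \<Rightarrow> ('a^'n) list list
    \<Rightarrow> (nat \<Rightarrow> nat) \<Rightarrow> ('a^'n) set \<Rightarrow> bool" where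
  "chain_span g bs r cs blk Vr \<longleftrightarrow>
     jordan_decomp g bs \<and> length cs = r \<and> inj_on blk {..<r} \<and>
     (\<forall>i < r. blk i < length bs \<and> jordan_chain g (cs ! i) \<and>
              set (cs ! i) \<subseteq> vec.span (set (bs ! blk i))) \<and>
     Vr = vec.span (\<Union>i < r. set (cs ! i))"

end

theory Submission
  imports Defs "HOL-Combinatorics.List_Permutation"
begin

(* Write N = g - 1 and U for the span of r Jordan chains of g. Every vector of a chain
   except its top one is the image under N of the next, so U is N-invariant and
   U = N U + (span of at most r vectors); by rank-nullity, ker N restricted to U has
   dimension at most r. Since N maps W_i into W_(i-1), rank-nullity on U \<inter> W_i bounds
   dim (U \<inter> W_i) - dim (U \<inter> W_(i-1)) by r, and the modular law bounds it by
   dim W_i - dim W_(i-1). Summing these increments gives the bound, with equality only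
   if every partial sum is attained. The r largest Jordan blocks themselves are r such
   chains, and their span has dimension the sum of their sizes. *)

context finite_dimensional_vector_space_pair_1
begin

lemma dim_image_plus_dim_kernel:
  assumes lf: "Vector_Spaces.linear s1 s2 f" and S: "vs1.subspace S"
  shows "vs2.dim (f ` S) + vs1.dim {x \<in> S. f x = 0} = vs1.dim S"
proof -
  interpret lf: Vector_Spaces.linear s1 s2 f by (fact lf)
  define K where "K = {x \<in> S. f x = 0}"
  have K: "vs1.subspace K" "K \<subseteq> S"
    using vs1.subspace_inter[OF S lf.subspace_kernel] unfolding K_def
    by (auto simp: Collect_conj_eq)
  obtain B where B: "B \<subseteq> K" "vs1.independent B" "K \<subseteq> vs1.span B" "card B = vs1.dim K"
    using vs1.basis_exists by blast
  obtain C where C: "B \<subseteq> C" "C \<subseteq> S" "vs1.independent C" "S \<subseteq> vs1.span C"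
    using vs1.maximal_independent_subset_extend[of B S] B K by blast
  define D where "D = C - B"
  have spanC: "vs1.span C = S"
    using C S vs1.span_minimal by blast
  have dimS: "vs1.dim S = card C"
    using vs1.dim_span_eq_card_independent[OF C(3)] spanC by simp
  have cardC: "card C = card D + card B"
    using vs1.finiteI_independent[OF C(3)] C(1) unfolding D_def
    by (metis card_Diff_subset card_mono finite_subset le_add_diff_inverse2)
  have indD: "vs1.independent D"
    unfolding D_def using C(3) vs1.independent_mono by blast
  have DB: "vs1.span D \<inter> vs1.span B \<subseteq> {0}"
  proof -
    have "D \<union> B = C"
      using C(1) unfolding D_def by blast
    then have "{x + y |x y. x \<in> vs1.span D \<and> y \<in> vs1.span B} = S"
      using spanC by (simp add: vs1.span_Un[symmetric])
    then have "vs1.dim S + vs1.dim (vs1.span D \<inter> vs1.span B) = card D + card B"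
      using vs1.dim_sums_Int[of "vs1.span D" "vs1.span B"] indD B(2)
      by (simp add: vs1.dim_eq_card_independent)
    then show ?thesis
      using dimS cardC by (simp add: vs1.dim_eq_0)
  qed
  have "inj_on f (vs1.span D)"
  proof (rule lf.inj_on_iff_eq_0[OF vs1.subspace_span, THEN iffD2], intro ballI impI)
    fix x assume x: "x \<in> vs1.span D" "f x = 0"
    have "x \<in> S"
      using x(1) spanC vs1.span_mono[of D C] D_def by blast
    then have "x \<in> vs1.span B"
      using x(2) B(3) K_def by blast
    then show "x = 0"
      using x(1) DB by blast
  qed
  then have dimD: "vs2.dim (f ` D) = card D"
    using dim_image_eq[OF lf] vs1.dim_eq_card_independent[OF indD] by simp
  have "vs2.span (f ` S) = vs2.span (f ` D)"
  proof (rule vs2.span_eq[THEN iffD2, OF conjI])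
    have "f ` C \<subseteq> vs2.span (f ` D)"
    proof
      fix y assume "y \<in> f ` C"
      then obtain x where x: "x \<in> C" "y = f x" by blast
      show "y \<in> vs2.span (f ` D)"
      proof (cases "x \<in> B")
        case True
        then have "y = 0"
          using x B(1) unfolding K_def by auto
        then show ?thesis by (simp add: vs2.span_zero)
      next
        case False
        then have "y \<in> f ` D"
          using x unfolding D_def by blast
        then show ?thesis by (rule vs2.span_base)
      qed
    qed
    then have "vs2.span (f ` C) \<subseteq> vs2.span (f ` D)"
      by (rule vs2.span_minimal) simp
    then show "f ` S \<subseteq> vs2.span (f ` D)"
      using lf.span_image[of C] spanC by simp
    show "f ` D \<subseteq> vs2.span (f ` S)"
      using C(2) vs2.span_superset[of "f ` S"] unfolding D_def by auto
  qed
  then have "vs2.dim (f ` S) = card D"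
    using dimD by (metis vs2.span_eq_dim)
  then show ?thesis
    using dimS cardC B(4) K_def by simp
qed

end

context finite_dimensional_vector_space
begin

lemma dim_le_dim_add_card:
  assumes "S \<subseteq> span (A \<union> T)" and "finite T"
  shows "dim S \<le> dim A + card T"
proof -
  obtain B where B: "B \<subseteq> A" "independent B" "A \<subseteq> span B" "card B = dim A"
    using basis_exists by blast
  have "A \<union> T \<subseteq> span (B \<union> T)"
    using B(3) span_mono[of B "B \<union> T"] span_superset[of "B \<union> T"] by blast
  then have "S \<subseteq> span (B \<union> T)"
    using assms(1) span_mono span_span by blast
  then have "dim S \<le> card (B \<union> T)"
    using B(2) \<open>finite T\<close> finiteI_independent by (intro dim_le_card) auto
  also have "\<dots> \<le> dim A + card T"
    using card_Un_le B(4) by metis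
  finally show ?thesis .
qed

lemma dim_Int_increment_le:
  assumes "subspace U" "subspace V" "subspace W" "V \<subseteq> W"
  shows "dim (U \<inter> W) + dim V \<le> dim W + dim (U \<inter> V)"
proof -
  have "U \<inter> W \<inter> V = U \<inter> V"
    using \<open>V \<subseteq> W\<close> by blast
  then have "dim {x + y |x y. x \<in> U \<inter> W \<and> y \<in> V} + dim (U \<inter> V) = dim (U \<inter> W) + dim V"
    using assms dim_sums_Int[of "U \<inter> W" V] by (simp add: subspace_inter)
  moreover have "dim {x + y |x y. x \<in> U \<inter> W \<and> y \<in> V} \<le> dim W"
    using assms(3,4) by (intro dim_subset) (auto intro: subspace_add)
  ultimately show ?thesis by linarith
qed

end

(* The slack (\<Sum>i=1..j. b i) - a j is nondecreasing in j; stated additively to avoid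
   truncated subtraction. *)
lemma bounded_increments_slack_mono:
  fixes a b :: "nat \<Rightarrow> nat"
  assumes step: "\<And>i. i < l \<Longrightarrow> a (Suc i) \<le> a i + b (Suc i)"
    and "j \<le> k" "k \<le> l"
  shows "a k + (\<Sum>i=1..j. b i) \<le> a j + (\<Sum>i=1..k. b i)"
  using \<open>j \<le> k\<close> \<open>k \<le> l\<close>
proof (induction k rule: dec_induct)
  case (step k)
  then show ?case using assms(1)[of k] by simp
qed simp

lemma sum_bounded_increments:
  fixes a b :: "nat \<Rightarrow> nat"
  assumes "a 0 = 0" and step: "\<And>i. i < l \<Longrightarrow> a (Suc i) \<le> a i + b (Suc i)"
  shows "a l \<le> (\<Sum>i=1..l. b i)"
    and "a l = (\<Sum>i=1..l. b i) \<longleftrightarrow> (\<forall>j\<in>{1..l}. a j = (\<Sum>i=1..j. b i))"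
proof -
  have bound: "a j \<le> (\<Sum>i=1..j. b i)" if "j \<le> l" for j
    using bounded_increments_slack_mono[where a = a and b = b and l = l, OF step, of 0 j]
      that \<open>a 0 = 0\<close>
    by simp
  then show "a l \<le> (\<Sum>i=1..l. b i)" by simp
  show "a l = (\<Sum>i=1..l. b i) \<longleftrightarrow> (\<forall>j\<in>{1..l}. a j = (\<Sum>i=1..j. b i))"
  proof
    assume "a l = (\<Sum>i=1..l. b i)"
    then show "\<forall>j\<in>{1..l}. a j = (\<Sum>i=1..j. b i)"
      using bounded_increments_slack_mono[where a = a and b = b and l = l, OF step, of _ l] bound
      by (force intro: antisym)
  next
    assume "\<forall>j\<in>{1..l}. a j = (\<Sum>i=1..j. b i)"
    then show "a l = (\<Sum>i=1..l. b i)"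
      using \<open>a 0 = 0\<close> by (cases l) auto
  qed
qed

lemma dim_invariant_subspace_flag_bound:
  fixes N :: "'a::field^'n \<Rightarrow> 'a^'n" and W :: "nat \<Rightarrow> ('a^'n) set"
  assumes lin: "Vector_Spaces.linear (*s) (*s) N"
    and W: "\<And>i. i \<le> l \<Longrightarrow> vec.subspace (W i)" "W 0 = {0}"
      "\<And>i. i < l \<Longrightarrow> W i \<subseteq> W (Suc i)" "\<And>i. i < l \<Longrightarrow> N ` W (Suc i) \<subseteq> W i"
    and U: "vec.subspace U" "N ` U \<subseteq> U" "U \<subseteq> W l"
    and ker: "vec.dim {x \<in> U. N x = 0} \<le> r"
  shows "vec.dim U \<le> flag_bound W r l"
    and "vec.dim U = flag_bound W r l \<longleftrightarrow> (\<forall>j\<in>{1..l}. vec.dim (U \<inter> W j) = flag_bound W r j)"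
proof -
  define a where "a j = vec.dim (U \<inter> W j)" for j
  define b where "b j = min r (vec.dim (W j) - vec.dim (W (j - 1)))" for j
  have "a 0 = 0"
    using W(2) vec.subspace_0[OF U(1)] unfolding a_def by (simp add: Int_absorb1)
  have step: "a (Suc i) \<le> a i + b (Suc i)" if "i < l" for i
  proof -
    have sub: "vec.subspace (U \<inter> W (Suc i))"
      using U(1) W(1) that by (simp add: vec.subspace_inter)
    have "N ` (U \<inter> W (Suc i)) \<subseteq> U \<inter> W i"
      using U(2) W(4)[OF that] by blast
    then have "vec.dim (N ` (U \<inter> W (Suc i))) \<le> a i"
      unfolding a_def by (rule vec.dim_subset)
    moreover have "vec.dim {x \<in> U \<inter> W (Suc i). N x = 0} \<le> vec.dim {x \<in> U. N x = 0}"
      by (rule vec.dim_subset) auto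
    ultimately have "a (Suc i) \<le> a i + r"
      using vec.dim_image_plus_dim_kernel[OF lin sub] ker unfolding a_def by linarith
    moreover have "a (Suc i) + vec.dim (W i) \<le> vec.dim (W (Suc i)) + a i"
      unfolding a_def using that by (intro vec.dim_Int_increment_le U(1) W(1,3)) simp_all
    ultimately show ?thesis
      unfolding b_def by auto
  qed
  have "a l = vec.dim U"
    using U(3) unfolding a_def by (simp add: Int_absorb2)
  moreover have "flag_bound W r j = (\<Sum>i=1..j. b i)" for j
    unfolding flag_bound_def b_def ..
  ultimately show "vec.dim U \<le> flag_bound W r l"
    and "vec.dim U = flag_bound W r l \<longleftrightarrow> (\<forall>j\<in>{1..l}. vec.dim (U \<inter> W j) = flag_bound W r j)"
    using sum_bounded_increments[of a l b, OF \<open>a 0 = 0\<close> step] unfolding a_def by simp_all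
qed

lemma jordan_chain_nth:
  assumes "jordan_chain g c" "i < length c"
  shows "(g - mat 1) *v (c ! i) = (if i = 0 then 0 else c ! (i - 1))"
  using assms unfolding jordan_chain_def by (simp add: matrix_vector_mult_diff_rdistrib)

lemma jordan_chain_image_subset:
  assumes "jordan_chain g c"
  shows "(*v) (g - mat 1) ` set c \<subseteq> insert 0 (set c)"
proof
  fix y assume "y \<in> (*v) (g - mat 1) ` set c"
  then obtain i where "i < length c" "y = (g - mat 1) *v (c ! i)"
    by (auto simp: in_set_conv_nth)
  then show "y \<in> insert 0 (set c)"
    using jordan_chain_nth[OF assms] by auto
qed

lemma jordan_chain_generated_by_last:
  assumes "jordan_chain g c" "c \<noteq> []"
  shows "set c \<subseteq> insert (last c) ((*v) (g - mat 1) ` set c)"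
proof
  fix x assume "x \<in> set c"
  then obtain i where i: "i < length c" "x = c ! i"
    by (auto simp: in_set_conv_nth)
  show "x \<in> insert (last c) ((*v) (g - mat 1) ` set c)"
  proof (cases "Suc i < length c")
    case True
    then have "x = (g - mat 1) *v (c ! Suc i)"
      using jordan_chain_nth[OF assms(1)] i by simp
    then show ?thesis
      using True by auto
  next
    case False
    then have "i = length c - 1"
      using i(1) by simp
    then have "x = last c"
      using i(2) assms(2) by (simp add: last_conv_nth)
    then show ?thesis by simp
  qed
qed

lemma span_jordan_chains_invariant:
  fixes g :: "'a::field^'n^'n"
  assumes "\<forall>c\<in>C. jordan_chain g c"
  shows "(*v) (g - mat 1) ` vec.span (\<Union>c\<in>C. set c) \<subseteq> vec.span (\<Union>c\<in>C. set c)"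
proof -
  define X where "X = (\<Union>c\<in>C. set c)"
  let ?N = "(*v) (g - mat 1)"
  have "?N ` X \<subseteq> insert 0 X"
  proof (rule image_subsetI)
    fix x assume "x \<in> X"
    then obtain c where c: "c \<in> C" "x \<in> set c"
      unfolding X_def by blast
    then have "?N x \<in> insert 0 (set c)"
      using jordan_chain_image_subset[of g c] assms by blast
    then show "?N x \<in> insert 0 X"
      using c unfolding X_def by blast
  qed
  also have "insert 0 X \<subseteq> vec.span X"
    using vec.span_superset vec.span_zero by blast
  finally have "vec.span (?N ` X) \<subseteq> vec.span X"
    by (simp add: vec.span_minimal)
  then show ?thesis
    unfolding X_def[symmetric] vec.span_image .
qed

lemma dim_kernel_span_jordan_chains_le:
  fixes g :: "'a::field^'n^'n"
  assumes C: "finite C" "\<forall>c\<in>C. jordan_chain g c"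
    and U: "U = vec.span (\<Union>c\<in>C. set c)"
  shows "vec.dim {x \<in> U. (g - mat 1) *v x = 0} \<le> card C"
proof -
  define X where "X = (\<Union>c\<in>C. set c)"
  define T where "T = last ` (C - {[]})"
  let ?N = "(*v) (g - mat 1)"
  have XU: "X \<subseteq> U"
    unfolding U X_def by (rule vec.span_superset)
  have "X \<subseteq> T \<union> ?N ` X"
  proof
    fix x assume "x \<in> X"
    then obtain c where c: "c \<in> C" "x \<in> set c"
      unfolding X_def by blast
    then have "jordan_chain g c" "c \<noteq> []"
      using C(2) by auto
    then have "x \<in> insert (last c) (?N ` set c)"
      using jordan_chain_generated_by_last c(2) by blast
    then show "x \<in> T \<union> ?N ` X"
      using c unfolding T_def X_def by auto
  qed
  then have "X \<subseteq> ?N ` U \<union> T"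
    using XU by blast
  then have "U \<subseteq> vec.span (?N ` U \<union> T)"
    unfolding U X_def[symmetric] by (rule vec.span_mono)
  then have "vec.dim U \<le> vec.dim (?N ` U) + card T"
    using C(1) unfolding T_def by (intro vec.dim_le_dim_add_card) auto
  also have "card T \<le> card C"
    unfolding T_def using C(1) by (meson card_image_le card_mono Diff_subset finite_Diff le_trans)
  finally show ?thesis
    using vec.dim_image_plus_dim_kernel[OF matrix_vector_mul_linear_gen, of U "g - mat 1"] U
    by simp
qed

lemma span_jordan_chains_flag_bound:
  fixes g :: "'a::field^'n^'n" and W :: "nat \<Rightarrow> ('a^'n) set"
  assumes flag: "is_flag l W" and gQ: "in_unipotent_radical g l W"
    and C: "finite C" "card C \<le> r" "\<forall>c\<in>C. jordan_chain g c"
    and U: "U = vec.span (\<Union>c\<in>C. set c)"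
  shows "vec.dim U \<le> flag_bound W r l"
    and "vec.dim U = flag_bound W r l \<longleftrightarrow> (\<forall>j\<in>{1..l}. vec.dim (U \<inter> W j) = flag_bound W r j)"
proof -
  have W: "\<And>i. i \<le> l \<Longrightarrow> vec.subspace (W i)" "W 0 = {0}" "W l = UNIV"
    and W_psubset: "\<forall>i\<in>{1..l}. W (i - 1) \<subset> W i"
    using flag by (simp_all add: is_flag_def)
  have W_mono: "W i \<subseteq> W (Suc i)" if "i < l" for i
    using bspec[OF W_psubset, of "Suc i"] that by simp
  have N_W: "(*v) (g - mat 1) ` W (Suc i) \<subseteq> W i" if "i < l" for i
  proof -
    have "\<forall>i\<in>{1..l}. \<forall>v\<in>W i. g *v v - v \<in> W (i - 1)"
      using gQ by (simp add: in_unipotent_radical_def)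
    from bspec[OF this, of "Suc i"] that have "\<forall>v\<in>W (Suc i). g *v v - v \<in> W i"
      by simp
    then show ?thesis by (auto simp: matrix_vector_mult_diff_rdistrib)
  qed
  have "vec.subspace U" "U \<subseteq> W l"
    using U W(3) by simp_all
  moreover have "vec.dim {x \<in> U. (g - mat 1) *v x = 0} \<le> r"
    using dim_kernel_span_jordan_chains_le[OF C(1,3) U] C(2) by linarith
  ultimately show "vec.dim U \<le> flag_bound W r l"
    and "vec.dim U = flag_bound W r l \<longleftrightarrow> (\<forall>j\<in>{1..l}. vec.dim (U \<inter> W j) = flag_bound W r j)"
    using dim_invariant_subspace_flag_bound[OF matrix_vector_mul_linear_gen W(1,2) W_mono N_W
        _ span_jordan_chains_invariant[OF C(3), folded U]]
    by simp_all
qed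

lemma sum_jordan_sizes_eq_sum_lengths:
  "\<exists>S \<subseteq> {..<length bs}. card S \<le> r \<and> (\<Sum>i<r. jordan_sizes bs i) = (\<Sum>j\<in>S. length (bs ! j))"
proof -
  define L where "L = rev (sort (map length bs))"
  define k where "k = min r (length bs)"
  have len: "length L = length bs"
    unfolding L_def by simp
  have "mset L = mset (map length bs)"
    unfolding L_def by simp
  then obtain f where "bij_betw f {..<length L} {..<length (map length bs)}"
    and "\<forall>i<length L. L ! i = map length bs ! f i"
    using permutation_Ex_bij by blast
  then have f: "bij_betw f {..<length bs} {..<length bs}" "\<forall>i<length bs. L ! i = length (bs ! f i)"
    using len bij_betw_apply by fastforce+
  have "(\<Sum>i<r. jordan_sizes bs i) = (\<Sum>i<r. if i < length bs then L ! i else 0)"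
    unfolding jordan_sizes_def Let_def L_def[symmetric] len ..
  also have "\<dots> = (\<Sum>i \<in> {..<r} \<inter> {..<length bs}. L ! i)"
    by (simp add: sum.inter_restrict)
  also have "{..<r} \<inter> {..<length bs} = {..<k}"
    unfolding k_def by auto
  also have "(\<Sum>i<k. L ! i) = (\<Sum>i<k. length (bs ! f i))"
    using f(2) unfolding k_def by simp
  also have "\<dots> = (\<Sum>j \<in> f ` {..<k}. length (bs ! j))"
    using bij_betw_imp_inj_on[OF f(1)] unfolding k_def
    by (simp add: sum.reindex inj_on_subset)
  finally have "(\<Sum>i<r. jordan_sizes bs i) = (\<Sum>j \<in> f ` {..<k}. length (bs ! j))" .
  moreover have "f ` {..<k} \<subseteq> {..<length bs}"
    using bij_betw_imp_surj_on[OF f(1)] unfolding k_def by auto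
  moreover have "card (f ` {..<k}) \<le> r"
    using card_image_le[of "{..<k}" f] unfolding k_def by simp
  ultimately show ?thesis by blast
qed

lemma dim_span_jordan_blocks:
  assumes bs: "jordan_decomp g bs" and S: "S \<subseteq> {..<length bs}"
  shows "vec.dim (vec.span (\<Union>j\<in>S. set (bs ! j))) = (\<Sum>j\<in>S. length (bs ! j))"
proof -
  have nonempty: "\<forall>b\<in>set bs. b \<noteq> []" and dist: "distinct (concat bs)"
    and indep: "vec.independent (set (concat bs))"
    using bs unfolding jordan_decomp_def by auto
  have "removeAll [] bs = bs"
    using nonempty by (intro removeAll_id) blast
  then have "distinct bs"
    using dist by (metis distinct_concat_iff)
  then have disjoint: "set (bs ! i) \<inter> set (bs ! j) = {}"
    if "i \<in> S" "j \<in> S" "i \<noteq> j" for i j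
  proof -
    have "i < length bs" "j < length bs" using that S by auto
    then have "bs ! i \<noteq> bs ! j" "bs ! i \<in> set bs" "bs ! j \<in> set bs"
      using \<open>distinct bs\<close> \<open>i \<noteq> j\<close> by (auto simp: nth_eq_iff_index_eq)
    then show ?thesis using dist by (simp add: distinct_concat_iff)
  qed
  have "(\<Union>j\<in>S. set (bs ! j)) \<subseteq> set (concat bs)"
    using S by (force intro: nth_mem)
  then have "vec.dim (vec.span (\<Union>j\<in>S. set (bs ! j))) = card (\<Union>j\<in>S. set (bs ! j))"
    using indep vec.independent_mono vec.dim_span_eq_card_independent by metis
  also have "\<dots> = (\<Sum>j\<in>S. card (set (bs ! j)))"
    using S disjoint by (intro card_UN_disjoint) (auto intro: finite_subset)
  also have "\<dots> = (\<Sum>j\<in>S. length (bs ! j))"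
    using S dist by (intro sum.cong) (auto simp: distinct_card distinct_concat_iff)
  finally show ?thesis .
qed

lemma sum_jordan_sizes_le_flag_bound:
  fixes g :: "'a::field^'n^'n" and W :: "nat \<Rightarrow> ('a^'n) set"
  assumes flag: "is_flag l W" and gQ: "in_unipotent_radical g l W" and bs: "jordan_decomp g bs"
  shows "(\<Sum>i<r. jordan_sizes bs i) \<le> flag_bound W r l"
proof -
  obtain S where S: "S \<subseteq> {..<length bs}" "card S \<le> r"
    and sizes: "(\<Sum>i<r. jordan_sizes bs i) = (\<Sum>j\<in>S. length (bs ! j))"
    using sum_jordan_sizes_eq_sum_lengths by blast
  have fin: "finite S"
    using S(1) finite_subset by blast
  have chains: "\<forall>c \<in> (!) bs ` S. jordan_chain g c"
    using bs S(1) unfolding jordan_decomp_def by auto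
  have "card ((!) bs ` S) \<le> r"
    using card_image_le[OF fin] S(2) le_trans by blast
  from span_jordan_chains_flag_bound(1)[OF flag gQ finite_imageI[OF fin] this chains refl]
  have "vec.dim (vec.span (\<Union>j\<in>S. set (bs ! j))) \<le> flag_bound W r l"
    by (simp add: image_image)
  then show ?thesis
    using dim_span_jordan_blocks[OF bs S(1)] sizes by simp
qed

theorem mainTheorem6:
  fixes g :: "'a::field^'n^'n" and W :: "nat \<Rightarrow> ('a^'n) set" and l :: nat
  assumes proper: "2 \<le> l"
    and flag: "is_flag l W"
    and gQ: "in_unipotent_radical g l W"
  shows "(\<forall>bs r cs blk Vr. 1 \<le> r \<longrightarrow> chain_span g bs r cs blk Vr \<longrightarrow>
            vec.dim Vr \<le> flag_bound W r l \<and>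
            (vec.dim Vr = flag_bound W r l \<longleftrightarrow>
               (\<forall>j \<in> {1..l}. vec.dim (Vr \<inter> W j) = flag_bound W r j)))
       \<and> (\<forall>bs. jordan_decomp g bs \<longrightarrow>
            (\<forall>r \<ge> 1. (\<Sum>i < r. jordan_sizes bs i) \<le> flag_bound W r l))"
proof (intro conjI allI impI)
  fix bs r cs blk Vr
  assume "chain_span g bs r cs blk Vr"
  then have len: "length cs = r" and chains: "\<forall>c\<in>set cs. jordan_chain g c"
    and "Vr = vec.span (\<Union>i<r. set (cs ! i))"
    unfolding chain_span_def by (auto simp: in_set_conv_nth)
  moreover have "set cs = (!) cs ` {..<r}"
    using len by (auto simp: in_set_conv_nth)
  ultimately have Vr: "Vr = vec.span (\<Union>c\<in>set cs. set c)"
    by (simp add: image_image)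
  have "card (set cs) \<le> r"
    using card_length len by metis
  note bound = span_jordan_chains_flag_bound[OF flag gQ finite_set this chains Vr]
  show "vec.dim Vr \<le> flag_bound W r l"
    by (fact bound(1))
  show "vec.dim Vr = flag_bound W r l \<longleftrightarrow> (\<forall>j \<in> {1..l}. vec.dim (Vr \<inter> W j) = flag_bound W r j)"
    by (fact bound(2))
next
  fix bs and r :: nat
  assume "jordan_decomp g bs"
  then show "(\<Sum>i < r. jordan_sizes bs i) \<le> flag_bound W r l"
    by (rule sum_jordan_sizes_le_flag_bound[OF flag gQ])
qed

end
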